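(* Let $L$ be a Latin square of order $n$ and let $\sigma=(\alpha,\beta,\gamma;(12))$ be an autoparatopism of $L$. Suppose $(i,j,k)\in O(L)$, and let $a=o_{\alpha\beta}(i)$, $b=o_{\beta\alpha}(j)$ and $c=o_\gamma(k)$. Then $$\operatorname{lcm}(2a,2b)=\operatorname{lcm}(2a,c)=\operatorname{lcm}(2b,c)=\operatorname{lcm}(2a,2b,c).$$
   Context: A Latin square $L$ of order $n$ is an $n\times n$ array with rows, columns and symbols indexed by $[n]=\{1,\dots,n\}$, in which each symbol occurs exactly once in each row and each column. Its set of triples is $O(L)=\{(i,j,L(i,j)):i,j\in[n]\}$. Permutations in $\mathcal S_n$ act on the right, and products are composed left to right: $i(\alpha\beta)=(i\alpha)\beta$. A paratopism is $\sigma=(\alpha,\beta,\gamma;\delta)$ with $\alpha,\beta,\gamma\in\mathcal S_n$ and $\delta\in\mathcal S_3$. It maps $L$ to the Latin square $L^\sigma$ whose triple set is obtained by replacing each triple $(x,y,z)\in O(L)$ with $(x\alpha,y\beta,z\gamma)$ and then permuting the three coordinates according to $\delta$. In particular, for $\delta=(12)$ the triple $(x,y,z)$ maps to $(y\beta,x\alpha,z\gamma)$. $\sigma$ is an autoparatopism of $L$ if $L^\sigma=L$. For a permutation $\pi$ and a point $i$, $o_\pi(i)$ denotes the length of the cycle of $\pi$ containing $i$; fixed points count as cycles of length $1$. *)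

theory Defs
  imports "HOL-Combinatorics.Combinatorics"
begin

text \<open>Latin squares of order n on the index set [n] = {1..n}, represented as
  functions L :: nat => nat => nat (only values on [n] x [n] matter).\<close>

definition latin_square :: "nat \<Rightarrow> (nat \<Rightarrow> nat \<Rightarrow> nat) \<Rightarrow> bool" where
  "latin_square n L \<longleftrightarrow>
     (\<forall>i\<in>{1..n}. bij_betw (\<lambda>j. L i j) {1..n} {1..n}) \<and>
     (\<forall>j\<in>{1..n}. bij_betw (\<lambda>i. L i j) {1..n} {1..n})"

definition triples :: "nat \<Rightarrow> (nat \<Rightarrow> nat \<Rightarrow> nat) \<Rightarrow> (nat \<times> nat \<times> nat) set" where
  "triples n L = {(i, j, L i j) | i j. i \<in> {1..n} \<and> j \<in> {1..n}}"

definition paratopism_12_image ::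
  "(nat \<Rightarrow> nat) \<Rightarrow> (nat \<Rightarrow> nat) \<Rightarrow> (nat \<Rightarrow> nat) \<Rightarrow> (nat \<times> nat \<times> nat) set \<Rightarrow> (nat \<times> nat \<times> nat) set" where
  "paratopism_12_image \<alpha> \<beta> \<gamma> T = (\<lambda>(x, y, z). (\<beta> y, \<alpha> x, \<gamma> z)) ` T"

definition autoparatopism_12 ::
  "nat \<Rightarrow> (nat \<Rightarrow> nat \<Rightarrow> nat) \<Rightarrow> (nat \<Rightarrow> nat) \<Rightarrow> (nat \<Rightarrow> nat) \<Rightarrow> (nat \<Rightarrow> nat) \<Rightarrow> bool" where
  "autoparatopism_12 n L \<alpha> \<beta> \<gamma> \<longleftrightarrow>
     \<alpha> permutes {1..n} \<and> \<beta> permutes {1..n} \<and> \<gamma> permutes {1..n} \<and>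
     paratopism_12_image \<alpha> \<beta> \<gamma> (triples n L) = triples n L"

definition cycle_len :: "(nat \<Rightarrow> nat) \<Rightarrow> nat \<Rightarrow> nat" where
  "cycle_len \<pi> i = card (orbit \<pi> i)"

end

theory Submission
  imports Defs
begin

(* Applying the autoparatopism twice maps a triple (x, y, z) to
   ((beta o alpha) x, (alpha o beta) y, gamma^2 z), so
   (((beta o alpha)^t) i, ((alpha o beta)^t) j, gamma^(2t) k) is a triple of L for every t.
   In a Latin square any two coordinates of a triple determine the third, hence any two of
   the conditions a | t, b | t, c | 2t imply the remaining one. This forces each of 2a, 2b, c
   to divide the lcm of the other two, so all pairwise lcms agree with the lcm of all three. *)

lemma card_orbit_eq_least_power:
  assumes "permutation p"
  shows "card (orbit p x) = least_power p x"
proof -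
  have "orbit p x = range (\<lambda>n. (p ^^ n) x)"
    using orbit_altdef_permutation[OF assms] by auto
  also have "\<dots> = set (support p x)"
    by (rule support_set[OF assms, symmetric])
  finally show ?thesis
    using distinct_card[OF cycle_of_permutation[OF assms]] by simp
qed

lemma cycle_len_dvd_iff:
  assumes "permutation p"
  shows "cycle_len p x dvd t \<longleftrightarrow> (p ^^ t) x = x"
  using least_power_dvd[OF assms]
  by (simp add: cycle_len_def card_orbit_eq_least_power[OF assms])

lemma lcm_pairwise_eq:
  fixes x y z :: "'a::semiring_gcd"
  assumes "z dvd lcm x y" and "y dvd lcm x z" and "x dvd lcm y z"
  shows "lcm x y = lcm x z \<and> lcm x z = lcm y z \<and> lcm y z = lcm (lcm x y) z"
proof -
  have "lcm (lcm x y) z = lcm x y"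
    using assms(1) by (simp add: lcm_proj1_if_dvd)
  moreover have "lcm (lcm x y) z = lcm x z"
    using assms(2) by (metis lcm.commute lcm.left_commute lcm_proj1_if_dvd normalize_lcm)
  moreover have "lcm (lcm x y) z = lcm y z"
    using assms(3) by (metis lcm.assoc lcm.commute lcm_proj1_if_dvd normalize_lcm)
  ultimately show ?thesis by simp
qed

lemma lcm_scaled_pairwise_eq:
  fixes a b c d :: nat
  assumes ab: "\<And>t. a dvd t \<Longrightarrow> b dvd t \<Longrightarrow> c dvd d * t"
    and ac: "\<And>t. a dvd t \<Longrightarrow> c dvd d * t \<Longrightarrow> b dvd t"
    and bc: "\<And>t. b dvd t \<Longrightarrow> c dvd d * t \<Longrightarrow> a dvd t"
  shows "lcm (d * a) (d * b) = lcm (d * a) c \<and>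
         lcm (d * a) c = lcm (d * b) c \<and>
         lcm (d * b) c = lcm (lcm (d * a) (d * b)) c"
proof (cases "d = 0")
  case True
  then show ?thesis by simp
next
  case False
  show ?thesis
  proof (rule lcm_pairwise_eq)
    show "c dvd lcm (d * a) (d * b)"
      using ab[of "lcm a b"] by (simp add: lcm_mult_left)
    obtain t where t: "lcm (d * a) c = d * t" and "a dvd t"
      by (metis dvd_lcm1 dvdE mult.assoc dvd_triv_left)
    moreover have "c dvd d * t"
      using t by (metis dvd_lcm2)
    ultimately show "d * b dvd lcm (d * a) c"
      using ac by simp
    obtain s where s: "lcm (d * b) c = d * s" and "b dvd s"
      by (metis dvd_lcm1 dvdE mult.assoc dvd_triv_left)
    moreover have "c dvd d * s"
      using s by (metis dvd_lcm2)
    ultimately show "d * a dvd lcm (d * b) c"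
      using bc by simp
  qed
qed

lemma mem_triples_iff:
  "(x, y, z) \<in> triples n L \<longleftrightarrow> x \<in> {1..n} \<and> y \<in> {1..n} \<and> z = L x y"
  unfolding triples_def by auto

lemma triples_third_unique:
  assumes "(x, y, z) \<in> triples n L" and "(x, y, z') \<in> triples n L"
  shows "z = z'"
  using assms by (simp add: mem_triples_iff)

lemma latin_square_triples_second_unique:
  assumes "latin_square n L"
    and "(x, y, z) \<in> triples n L" and "(x, y', z) \<in> triples n L"
  shows "y = y'"
proof -
  have "inj_on (\<lambda>y. L x y) {1..n}"
    using assms unfolding latin_square_def mem_triples_iff by (auto intro: bij_betw_imp_inj_on)
  then show ?thesis
    using assms(2,3) unfolding mem_triples_iff by (auto dest: inj_onD)
qed

lemma latin_square_triples_first_unique: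
  assumes "latin_square n L"
    and "(x, y, z) \<in> triples n L" and "(x', y, z) \<in> triples n L"
  shows "x = x'"
proof -
  have "inj_on (\<lambda>x. L x y) {1..n}"
    using assms unfolding latin_square_def mem_triples_iff by (auto intro: bij_betw_imp_inj_on)
  then show ?thesis
    using assms(2,3) unfolding mem_triples_iff by (auto dest: inj_onD)
qed

lemma autoparatopism_12_permutations:
  assumes "autoparatopism_12 n L \<alpha> \<beta> \<gamma>"
  shows "permutation \<alpha>" and "permutation \<beta>" and "permutation \<gamma>"
  using assms permutes_imp_permutation[of "{1..n}"]
  unfolding autoparatopism_12_def by auto

lemma autoparatopism_12_triple:
  assumes "autoparatopism_12 n L \<alpha> \<beta> \<gamma>" and "(x, y, z) \<in> triples n L"
  shows "(\<beta> y, \<alpha> x, \<gamma> z) \<in> triples n L"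
proof -
  have "(\<beta> y, \<alpha> x, \<gamma> z) \<in> paratopism_12_image \<alpha> \<beta> \<gamma> (triples n L)"
    unfolding paratopism_12_image_def using assms(2) by force
  then show ?thesis
    using assms(1) unfolding autoparatopism_12_def by simp
qed

lemma autoparatopism_12_funpow_triple:
  assumes "autoparatopism_12 n L \<alpha> \<beta> \<gamma>" and "(i, j, k) \<in> triples n L"
  shows "(((\<beta> \<circ> \<alpha>) ^^ t) i, ((\<alpha> \<circ> \<beta>) ^^ t) j, (\<gamma> ^^ (2 * t)) k) \<in> triples n L"
proof (induction t)
  case 0
  then show ?case using assms(2) by simp
next
  case (Suc t)
  have "2 * Suc t = Suc (Suc (2 * t))" by simp
  with autoparatopism_12_triple[OF assms(1) autoparatopism_12_triple[OF assms(1) Suc]]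
  show ?case by (simp only: funpow.simps comp_apply)
qed

theorem lemma3p2:
  fixes n :: nat and L :: "nat \<Rightarrow> nat \<Rightarrow> nat" and \<alpha> \<beta> \<gamma> :: "nat \<Rightarrow> nat"
    and i j k :: nat
  assumes "latin_square n L"
    and "autoparatopism_12 n L \<alpha> \<beta> \<gamma>"
    and "(i, j, k) \<in> triples n L"
  defines "a \<equiv> cycle_len (\<beta> \<circ> \<alpha>) i"
    and "b \<equiv> cycle_len (\<alpha> \<circ> \<beta>) j"
    and "c \<equiv> cycle_len \<gamma> k"
  shows "lcm (2 * a) (2 * b) = lcm (2 * a) c \<and>
         lcm (2 * a) c = lcm (2 * b) c \<and>
         lcm (2 * b) c = lcm (lcm (2 * a) (2 * b)) c"
proof (rule lcm_scaled_pairwise_eq)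
  note perms = autoparatopism_12_permutations[OF assms(2)]
  have a: "a dvd t \<longleftrightarrow> ((\<beta> \<circ> \<alpha>) ^^ t) i = i"
    and b: "b dvd t \<longleftrightarrow> ((\<alpha> \<circ> \<beta>) ^^ t) j = j"
    and c: "c dvd 2 * t \<longleftrightarrow> (\<gamma> ^^ (2 * t)) k = k" for t
    unfolding a_def b_def c_def using perms
    by (simp_all add: cycle_len_dvd_iff permutation_compose)
  note triple = autoparatopism_12_funpow_triple[OF assms(2,3)]
  show "c dvd 2 * t" if "a dvd t" and "b dvd t" for t
  proof -
    have "(i, j, (\<gamma> ^^ (2 * t)) k) \<in> triples n L"
      using triple[of t] that a b by simp
    then show ?thesis
      using triples_third_unique[OF _ assms(3)] c by blast
  qed
  show "b dvd t" if "a dvd t" and "c dvd 2 * t" for t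
  proof -
    have "(i, ((\<alpha> \<circ> \<beta>) ^^ t) j, k) \<in> triples n L"
      using triple[of t] that a c by simp
    then show ?thesis
      using latin_square_triples_second_unique[OF assms(1) _ assms(3)] b by blast
  qed
  show "a dvd t" if "b dvd t" and "c dvd 2 * t" for t
  proof -
    have "(((\<beta> \<circ> \<alpha>) ^^ t) i, j, k) \<in> triples n L"
      using triple[of t] that b c by simp
    then show ?thesis
      using latin_square_triples_first_unique[OF assms(1) _ assms(3)] a by blast
  qed
qed

end
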